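(* Let $g:\{0,1\}^n\to\{0,1\}$ be odd, and for $k\ge 3$ let $G_k=g^{\otimes\binom k2}$ denote the GSWF on $n$ voters and $k$ alternatives with $G_k^{a,b}(x)=g(x^{a,b})$ for all $a\ne b$. Then \[ GCW(G_4)=2\,GCW(G_3)-1, \] and \[ GCW(G_5)=\frac{GCW(G_6)}{3}+\frac{5\,GCW(G_3)}{3}-1. \]
   Context: $g$ odd means $g(1-y_1,\dots,1-y_n)=1-g(y)$. Profiles $x\in(L_k)^n$ are uniform random, $L_k$ the linear orders on $k$ alternatives; $x^{a,b}_i=1$ iff voter $i$ ranks $a$ above $b$. An alternative $a$ is a generalized Condorcet winner (GCW) of $G_k$ at $x$ if $G_k^{a,b}(x)=1$ for all $b\ne a$; $GCW(G_k)=\Pr_x[G_k$ has a GCW at $x]$. *)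

theory Defs
  imports "HOL-Combinatorics.Permutations" Complex_Main
begin

text \<open>Boolean functions g on {0,1}^n are functions on bool lists of length n
  (True = 1).  g is odd if g(1-y) = 1 - g(y) for all y in {0,1}^n.\<close>
definition odd_bool_fun :: "nat \<Rightarrow> (bool list \<Rightarrow> bool) \<Rightarrow> bool" where
  "odd_bool_fun n g \<longleftrightarrow> (\<forall>y. length y = n \<longrightarrow> g (map Not y) = (\<not> g y))"

text \<open>Linear orders on the k alternatives {0..<k}, encoded as rank bijections p:
  alternative a is ranked above b iff p a < p b.\<close>
definition linorders :: "nat \<Rightarrow> (nat \<Rightarrow> nat) set" where
  "linorders k = {p. p permutes {..<k}}"

definition profiles :: "nat \<Rightarrow> nat \<Rightarrow> (nat \<Rightarrow> nat) list set" where
  "profiles n k = {xs. length xs = n \<and> set xs \<subseteq> linorders k}"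

definition pref :: "(nat \<Rightarrow> nat) list \<Rightarrow> nat \<Rightarrow> nat \<Rightarrow> bool list" where
  "pref xs a b = map (\<lambda>p. p a < p b) xs"

text \<open>G_k = g^{(k choose 2)}: G_k^{a,b}(x) = g(x^{a,b}); a is a generalized Condorcet
  winner at x if G_k^{a,b}(x) = 1 for all b \<noteq> a.\<close>
definition has_GCW :: "(bool list \<Rightarrow> bool) \<Rightarrow> nat \<Rightarrow> (nat \<Rightarrow> nat) list \<Rightarrow> bool" where
  "has_GCW g k xs \<longleftrightarrow> (\<exists>a<k. \<forall>b<k. b \<noteq> a \<longrightarrow> g (pref xs a b))"

definition GCW :: "(bool list \<Rightarrow> bool) \<Rightarrow> nat \<Rightarrow> nat \<Rightarrow> real" where
  "GCW g n k = real (card {xs \<in> profiles n k. has_GCW g k xs}) / real (card (profiles n k))"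

end

theory Submission
  imports Defs
begin

(*
  Fix an alternative a and encode its contest against b as the sign
  s_b = +1 if g declares a above b and s_b = -1 otherwise.  Alternative a is a generalized Condorcet winner iff all k-1 signs
  are +1, i.e. its indicator is prod_b (1 + s_b)/2 = 2^-(k-1) * sum over subsets X of
  the products prod_{b in X} s_b.  Averaged over a uniform profile, the correlation of
  such a product depends only on |X| (relabelling the alternatives, and forgetting
  alternatives outside {a} and X, preserve the uniform distribution); call it
  moment j.  Reversing every ranking shows moment j = 0 for odd j, as g is odd.  Since
  g is odd there is at most one winner, so
      GCW(G_k) = k * 2^-(k-1) * sum_j (k-1 choose j) * moment j,
  and GCW(G_3), ..., GCW(G_6) are affine in moment 2 and moment 4 only; eliminating
  them gives both identities.
*)

definition uniform_mean :: "nat \<Rightarrow> nat \<Rightarrow> ((nat \<Rightarrow> nat) list \<Rightarrow> real) \<Rightarrow> real" where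
  "uniform_mean n k F = (\<Sum>xs\<in>profiles n k. F xs) / real (card (profiles n k))"

lemma finite_linorders: "finite (linorders k)"
  unfolding linorders_def by (simp add: finite_permutations)

lemma finite_profiles: "finite (profiles n k)"
proof -
  have "profiles n k = {xs. set xs \<subseteq> linorders k \<and> length xs = n}"
    unfolding profiles_def by auto
  then show ?thesis using finite_lists_length_eq[OF finite_linorders] by simp
qed

lemma card_profiles_pos: "card (profiles n k) > 0"
proof -
  have "replicate n id \<in> profiles n k"
    unfolding profiles_def linorders_def by (auto simp: permutes_id)
  then show ?thesis using finite_profiles card_gt_0_iff by blast
qed

lemma profile_permutes: "xs \<in> profiles n k \<Longrightarrow> p \<in> set xs \<Longrightarrow> p permutes {..<k}"
  unfolding profiles_def linorders_def by auto

lemma length_profile: "xs \<in> profiles n k \<Longrightarrow> length xs = n"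
  unfolding profiles_def by auto

lemma length_pref [simp]: "length (pref xs a b) = length xs"
  unfolding pref_def by simp

lemma uniform_mean_cong:
  "(\<And>xs. xs \<in> profiles n k \<Longrightarrow> F xs = G xs) \<Longrightarrow> uniform_mean n k F = uniform_mean n k G"
  unfolding uniform_mean_def by (simp cong: sum.cong)

lemma uniform_mean_const: "uniform_mean n k (\<lambda>_. c) = c"
  using card_profiles_pos[of n k] unfolding uniform_mean_def by simp

lemma uniform_mean_cmult: "uniform_mean n k (\<lambda>xs. c * F xs) = c * uniform_mean n k F"
  unfolding uniform_mean_def by (simp add: sum_distrib_left)

lemma uniform_mean_sum:
  "uniform_mean n k (\<lambda>xs. \<Sum>i\<in>I. F i xs) = (\<Sum>i\<in>I. uniform_mean n k (F i))"
  unfolding uniform_mean_def sum_divide_distrib[symmetric] by (subst sum.swap) simp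

lemma uniform_mean_map_bij:
  assumes h: "bij_betw h (linorders k) (linorders k)"
  shows "uniform_mean n k (\<lambda>xs. F (map h xs)) = uniform_mean n k F"
proof -
  let ?h' = "inv_into (linorders k) h"
  have h': "bij_betw ?h' (linorders k) (linorders k)" by (rule bij_betw_inv_into[OF h])
  have "(\<Sum>xs\<in>profiles n k. F (map h xs)) = (\<Sum>xs\<in>profiles n k. F xs)"
  proof (rule sum.reindex_bij_witness[where i = "map ?h'" and j = "map h"])
    fix xs assume xs: "xs \<in> profiles n k"
    then have L: "set xs \<subseteq> linorders k" unfolding profiles_def by simp
    show "map ?h' (map h xs) = xs"
      using L bij_betw_inv_into_left[OF h] by (auto intro!: map_idI)
    show "map h (map ?h' xs) = xs"
      using L bij_betw_inv_into_right[OF h] by (auto intro!: map_idI)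
    show "map h xs \<in> profiles n k" "map ?h' xs \<in> profiles n k"
      using xs L bij_betw_apply[OF h] bij_betw_apply[OF h'] by (auto simp: profiles_def)
  qed simp
  then show ?thesis unfolding uniform_mean_def by simp
qed

lemma bij_relabel:
  assumes \<sigma>: "\<sigma> permutes {..<k}"
  shows "bij_betw (\<lambda>p. p \<circ> \<sigma>) (linorders k) (linorders k)"
  by (rule bij_betw_byWitness[where f' = "\<lambda>p. p \<circ> inv \<sigma>"])
    (auto simp: linorders_def comp_assoc permutes_inv_o[OF \<sigma>]
      intro: permutes_compose[OF \<sigma>] permutes_compose[OF permutes_inv[OF \<sigma>]])

definition reverse_rank :: "nat \<Rightarrow> nat \<Rightarrow> nat" where
  "reverse_rank k r = (if r < k then k - 1 - r else r)"

lemma bij_reverse: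
  "bij_betw (\<lambda>p. reverse_rank k \<circ> p) (linorders k) (linorders k)"
proof -
  have rev: "reverse_rank k permutes {..<k}"
    by (rule bij_imp_permutes, rule bij_betw_byWitness[where f' = "reverse_rank k"])
      (auto simp: reverse_rank_def)
  show ?thesis
    by (rule bij_betw_byWitness[where f' = "\<lambda>p. reverse_rank k \<circ> p"])
      (auto simp: linorders_def fun_eq_iff reverse_rank_def intro: permutes_compose[OF _ rev])
qed

lemma pref_reverse:
  assumes xs: "xs \<in> profiles n k" and ab: "a < k" "b < k" "a \<noteq> b"
  shows "pref (map (\<lambda>p. reverse_rank k \<circ> p) xs) a b = map Not (pref xs a b)"
  unfolding pref_def map_map o_def
proof (rule map_cong[OF refl])
  fix p assume "p \<in> set xs"
  then have p: "p permutes {..<k}" using profile_permutes xs by blast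
  have "p a < k" "p b < k" using permutes_in_image[OF p] ab by auto
  moreover have "p a \<noteq> p b" using permutes_inj[OF p] ab(3) by (auto dest: injD)
  ultimately show "(reverse_rank k (p a) < reverse_rank k (p b)) = (\<not> p a < p b)"
    by (auto simp: reverse_rank_def)
qed

lemma pref_swap:
  assumes xs: "xs \<in> profiles n k" and ab: "a < k" "b < k" "a \<noteq> b"
  shows "pref xs b a = map Not (pref xs a b)"
  unfolding pref_def map_map o_def
proof (rule map_cong[OF refl])
  fix p assume "p \<in> set xs"
  then have p: "p permutes {..<k}" using profile_permutes xs by blast
  have "p a \<noteq> p b" using permutes_inj[OF p] ab(3) by (auto dest: injD)
  then show "(p b < p a) = (\<not> p a < p b)" by auto
qed

text \<open>Restriction of a linear order on k+1 alternatives to the first k alternatives,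
  re-encoded as ranks in {..<k}: the new rank of x is the number of y < k ranked above x.\<close>
definition restrict_order :: "nat \<Rightarrow> (nat \<Rightarrow> nat) \<Rightarrow> nat \<Rightarrow> nat" where
  "restrict_order k p x = (if x < k then card {y. y < k \<and> p y < p x} else x)"

lemma restrict_order_less: "x < k \<Longrightarrow> restrict_order k p x < k"
proof -
  assume x: "x < k"
  have "card {y. y < k \<and> p y < p x} \<le> card ({..<k} - {x})" by (intro card_mono) auto
  also have "\<dots> < k" using x by simp
  finally show ?thesis using x by (simp add: restrict_order_def)
qed

lemma restrict_order_mono:
  assumes "x < k" "x' < k" "p x < p x'"
  shows "restrict_order k p x < restrict_order k p x'"
proof -
  have "{y. y < k \<and> p y < p x} \<subset> {y. y < k \<and> p y < p x'}" using assms by auto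
  then have "card {y. y < k \<and> p y < p x} < card {y. y < k \<and> p y < p x'}"
    by (intro psubset_card_mono) auto
  then show ?thesis using assms by (simp add: restrict_order_def)
qed

lemma restrict_order_less_iff:
  assumes p: "inj p" and x: "x < k" "x' < k"
  shows "restrict_order k p x < restrict_order k p x' \<longleftrightarrow> p x < p x'"
proof -
  have "p x < p x' \<or> p x' < p x \<or> x = x'" using p by (metis injD linorder_neqE_nat)
  then show ?thesis using restrict_order_mono[OF x] restrict_order_mono[OF x(2,1)] by fastforce
qed

lemma restrict_order_permutes:
  assumes p: "inj p" shows "restrict_order k p permutes {..<k}"
proof (rule bij_imp_permutes)
  have img: "restrict_order k p ` {..<k} \<subseteq> {..<k}" using restrict_order_less by auto
  have inj: "inj_on (restrict_order k p) {..<k}"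
    by (rule inj_onI) (use restrict_order_less_iff[OF p] in \<open>metis lessThan_iff
        linorder_neqE_nat less_irrefl injD[OF p]\<close>)
  show "bij_betw (restrict_order k p) {..<k} {..<k}"
    using endo_inj_surj[OF _ img inj] inj unfolding bij_betw_def by auto
qed (simp add: restrict_order_def)

lemma restrict_order_comp:
  assumes \<sigma>: "\<sigma> permutes {..<k}"
  shows "restrict_order k (p \<circ> \<sigma>) = restrict_order k p \<circ> \<sigma>"
proof
  fix x
  show "restrict_order k (p \<circ> \<sigma>) x = (restrict_order k p \<circ> \<sigma>) x"
  proof (cases "x < k")
    case True
    have "bij_betw \<sigma> {y. y < k \<and> p (\<sigma> y) < p (\<sigma> x)} {z. z < k \<and> p z < p (\<sigma> x)}"
      by (rule bij_betw_byWitness[where f' = "inv \<sigma>"])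
        (use permutes_in_image[OF \<sigma>] permutes_inverses[OF \<sigma>]
          permutes_in_image[OF permutes_inv[OF \<sigma>]] in auto)
    then show ?thesis
      using True permutes_in_image[OF \<sigma>, of x]
      by (simp add: restrict_order_def bij_betw_same_card)
  qed (simp add: restrict_order_def permutes_not_in[OF \<sigma>])
qed

lemma restrict_order_linorders: "p \<in> linorders (Suc k) \<Longrightarrow> restrict_order k p \<in> linorders k"
  unfolding linorders_def using restrict_order_permutes permutes_inj by auto

text \<open>All fibres of restriction have the same size, since relabelling by q maps
  the fibre over the identity bijectively onto the fibre over q.\<close>
definition restrict_fiber :: "nat \<Rightarrow> (nat \<Rightarrow> nat) \<Rightarrow> (nat \<Rightarrow> nat) set" where
  "restrict_fiber k q = {p \<in> linorders (Suc k). restrict_order k p = q}"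

lemma card_restrict_fiber:
  assumes q: "q \<in> linorders k"
  shows "card (restrict_fiber k q) = card (restrict_fiber k id)"
proof -
  have q': "q permutes {..<k}" using q unfolding linorders_def by simp
  have qS: "q permutes {..<Suc k}" "inv q permutes {..<Suc k}"
    using permutes_subset[OF q'] permutes_subset[OF permutes_inv[OF q']] by auto
  have "bij_betw (\<lambda>p. p \<circ> inv q) (restrict_fiber k q) (restrict_fiber k id)"
  proof (rule bij_betw_byWitness[where f' = "\<lambda>p. p \<circ> q"])
    show "(\<lambda>p. p \<circ> inv q) ` restrict_fiber k q \<subseteq> restrict_fiber k id"
    proof clarify
      fix p assume "p \<in> restrict_fiber k q"
      then have "p permutes {..<Suc k}" "restrict_order k p = q"
        by (auto simp: restrict_fiber_def linorders_def)
      then show "p \<circ> inv q \<in> restrict_fiber k id"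
        using permutes_compose[OF qS(2)] permutes_inv_o[OF q']
        by (simp add: restrict_fiber_def linorders_def restrict_order_comp[OF permutes_inv[OF q']])
    qed
    show "(\<lambda>p. p \<circ> q) ` restrict_fiber k id \<subseteq> restrict_fiber k q"
      using permutes_compose[OF qS(1)]
      by (auto simp: restrict_fiber_def linorders_def restrict_order_comp[OF q'])
  qed (auto simp: comp_assoc permutes_inv_o[OF q'])
  then show ?thesis by (rule bij_betw_same_card)
qed

lemma card_lists_fiber:
  assumes L: "finite L"
  shows "card {xs. length xs = length ys \<and> set xs \<subseteq> L \<and> map f xs = ys}
         = (\<Prod>y\<leftarrow>ys. card {p \<in> L. f p = y})"
proof (induction ys)
  case Nil
  have "{xs. length xs = length [] \<and> set xs \<subseteq> L \<and> map f xs = []} = {[]}" by auto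
  then show ?case by simp
next
  case (Cons y ys)
  let ?A = "{p \<in> L. f p = y}"
  let ?B = "{xs. length xs = length ys \<and> set xs \<subseteq> L \<and> map f xs = ys}"
  have "{xs. length xs = length (y # ys) \<and> set xs \<subseteq> L \<and> map f xs = y # ys}
      = (\<lambda>(p, xs). p # xs) ` (?A \<times> ?B)"
    by (auto simp: length_Suc_conv)
  moreover have "inj_on (\<lambda>(p, xs). p # xs) (?A \<times> ?B)" by (auto simp: inj_on_def)
  ultimately show ?case using Cons by (simp add: card_image card_cartesian_product)
qed

lemma card_profiles_fiber:
  assumes ys: "ys \<in> profiles n k"
  shows "card {xs \<in> profiles n (Suc k). map (restrict_order k) xs = ys}
       = card (restrict_fiber k id) ^ n"
proof -
  have "{xs \<in> profiles n (Suc k). map (restrict_order k) xs = ys}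
      = {xs. length xs = length ys \<and> set xs \<subseteq> linorders (Suc k) \<and> map (restrict_order k) xs = ys}"
    using ys unfolding profiles_def by auto
  then have "card {xs \<in> profiles n (Suc k). map (restrict_order k) xs = ys}
      = (\<Prod>y\<leftarrow>ys. card (restrict_fiber k y))"
    using card_lists_fiber[OF finite_linorders] unfolding restrict_fiber_def by simp
  also have "\<dots> = (\<Prod>y\<leftarrow>ys. card (restrict_fiber k id))"
    using ys card_restrict_fiber by (intro arg_cong[where f = prod_list] map_cong)
      (auto simp: profiles_def)
  finally show ?thesis using ys by (simp add: map_replicate_const length_profile)
qed

lemma sum_profiles_restrict:
  "(\<Sum>xs\<in>profiles n (Suc k). F (map (restrict_order k) xs))
     = real (card (restrict_fiber k id)) ^ n * (\<Sum>ys\<in>profiles n k. F ys)"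
proof -
  have img: "map (restrict_order k) ` profiles n (Suc k) \<subseteq> profiles n k"
    by (fastforce simp: profiles_def intro: restrict_order_linorders)
  have "(\<Sum>xs\<in>profiles n (Suc k). F (map (restrict_order k) xs))
      = (\<Sum>ys\<in>profiles n k. \<Sum>xs | xs \<in> profiles n (Suc k) \<and> map (restrict_order k) xs = ys. F ys)"
    using sum.group[OF finite_profiles finite_profiles img, of "\<lambda>xs. F (map (restrict_order k) xs)"]
    by (auto intro!: sum.cong)
  also have "\<dots> = (\<Sum>ys\<in>profiles n k. real (card (restrict_fiber k id)) ^ n * F ys)"
    by (intro sum.cong refl) (simp add: card_profiles_fiber)
  finally show ?thesis by (simp add: sum_distrib_left)
qed

lemma uniform_mean_restrict:
  "uniform_mean n (Suc k) (\<lambda>xs. F (map (restrict_order k) xs)) = uniform_mean n k F"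
proof -
  let ?c = "real (card (restrict_fiber k id)) ^ n"
  have card: "real (card (profiles n (Suc k))) = ?c * real (card (profiles n k))"
    using sum_profiles_restrict[where F = "\<lambda>_. 1" and n = n and k = k] by simp
  then have "?c \<noteq> 0" using card_profiles_pos[of n "Suc k"] by (metis mult_zero_left of_nat_0_less_iff less_irrefl)
  then show ?thesis unfolding uniform_mean_def sum_profiles_restrict card
    by (rule nonzero_mult_divide_mult_cancel_left)
qed

lemma pref_restrict:
  assumes xs: "xs \<in> profiles n (Suc k)" and ab: "a < k" "b < k"
  shows "pref (map (restrict_order k) xs) a b = pref xs a b"
  unfolding pref_def map_map o_def
proof (rule map_cong[OF refl])
  fix p assume "p \<in> set xs"
  then have "inj p" using profile_permutes[OF xs] permutes_inj by blast
  then show "(restrict_order k p a < restrict_order k p b) = (p a < p b)"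
    using restrict_order_less_iff ab by blast
qed

definition signed :: "(bool list \<Rightarrow> bool) \<Rightarrow> bool list \<Rightarrow> real" where
  "signed g v = (if g v then 1 else -1)"

definition corr :: "(bool list \<Rightarrow> bool) \<Rightarrow> nat \<Rightarrow> nat \<Rightarrow> nat \<Rightarrow> nat set \<Rightarrow> real" where
  "corr g n k a T = uniform_mean n k (\<lambda>xs. \<Prod>b\<in>T. signed g (pref xs a b))"

lemma signed_Not:
  "odd_bool_fun n g \<Longrightarrow> length v = n \<Longrightarrow> signed g (map Not v) = - signed g v"
  unfolding odd_bool_fun_def signed_def by auto

lemma exists_permutes_mapping:
  assumes S: "finite S" and a: "a \<in> S" and a': "a' \<in> S"
    and T: "T \<subseteq> S - {a}" and T': "T' \<subseteq> S - {a'}" and c: "card T = card T'"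
  shows "\<exists>\<sigma>. \<sigma> permutes S \<and> \<sigma> a' = a \<and> \<sigma> ` T' = T"
proof -
  have fin: "finite T" "finite T'" using S T T' finite_subset by blast+
  obtain f where f: "bij_betw f T' T" using finite_same_card_bij[OF fin(2,1)] c by metis
  have "card (S - {a} - T) = card (S - {a'} - T')"
    using S T T' a a' c fin by (simp add: card_Diff_subset)
  then obtain h where h: "bij_betw h (S - {a'} - T') (S - {a} - T)"
    using finite_same_card_bij S by (metis finite_Diff)
  define \<sigma> where "\<sigma> x = (if x = a' then a else if x \<in> T' then f x else if x \<in> S then h x else x)" for x
  have "bij_betw \<sigma> ({a'} \<union> T' \<union> (S - {a'} - T')) ({a} \<union> T \<union> (S - {a} - T))"
  proof (intro bij_betw_combine)
    show "bij_betw \<sigma> {a'} {a}" unfolding \<sigma>_def bij_betw_def by auto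
    show "bij_betw \<sigma> T' T"
      by (rule bij_betw_cong[THEN iffD1, OF _ f]) (use T' in \<open>auto simp: \<sigma>_def\<close>)
    show "bij_betw \<sigma> (S - {a'} - T') (S - {a} - T)"
      by (rule bij_betw_cong[THEN iffD1, OF _ h]) (auto simp: \<sigma>_def)
  qed (use T in auto)
  moreover have "{a'} \<union> T' \<union> (S - {a'} - T') = S" "{a} \<union> T \<union> (S - {a} - T) = S"
    using a a' T T' by auto
  ultimately have "\<sigma> permutes S"
    by (intro bij_imp_permutes) (use a' T' in \<open>auto simp: \<sigma>_def\<close>)
  moreover have "\<sigma> ` T' = T"
    using f T' unfolding bij_betw_def \<sigma>_def by (auto intro!: image_cong)
  moreover have "\<sigma> a' = a" by (simp add: \<sigma>_def)
  ultimately show ?thesis by blast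
qed

lemma corr_relabel:
  assumes "a < k" "a' < k" "T \<subseteq> {..<k} - {a}" "T' \<subseteq> {..<k} - {a'}" "card T = card T'"
  shows "corr g n k a T = corr g n k a' T'"
proof -
  obtain \<sigma> where \<sigma>: "\<sigma> permutes {..<k}" "\<sigma> a' = a" "\<sigma> ` T' = T"
    using exists_permutes_mapping[of "{..<k}" a a' T T'] assms by auto
  have "corr g n k a' T'
      = uniform_mean n k (\<lambda>xs. \<Prod>b\<in>T'. signed g (pref (map (\<lambda>p. p \<circ> \<sigma>) xs) a' b))"
    unfolding corr_def by (rule uniform_mean_map_bij[OF bij_relabel[OF \<sigma>(1)], symmetric])
  also have "\<dots> = uniform_mean n k (\<lambda>xs. \<Prod>b\<in>T'. signed g (pref xs a (\<sigma> b)))"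
    by (simp add: pref_def o_def \<sigma>(2))
  also have "\<dots> = corr g n k a T"
    unfolding corr_def \<sigma>(3)[symmetric]
    by (simp add: prod.reindex[OF permutes_inj_on[OF \<sigma>(1)]] o_def)
  finally show ?thesis ..
qed

lemma corr_Suc:
  assumes a: "a < k" and T: "T \<subseteq> {..<k}"
  shows "corr g n (Suc k) a T = corr g n k a T"
proof -
  have "corr g n (Suc k) a T
      = uniform_mean n (Suc k) (\<lambda>xs. \<Prod>b\<in>T. signed g (pref (map (restrict_order k) xs) a b))"
    unfolding corr_def uniform_mean_def
    by (intro arg_cong2[where f = "(/)"] sum.cong prod.cong refl)
      (use pref_restrict a T in \<open>auto simp del: pref_def\<close>)
  also have "\<dots> = corr g n k a T"
    unfolding corr_def by (rule uniform_mean_restrict)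
  finally show ?thesis .
qed

lemma corr_stable:
  assumes "m \<le> k" "a < m" "T \<subseteq> {..<m}"
  shows "corr g n k a T = corr g n m a T"
  using assms(1)
proof (induction k rule: dec_induct)
  case (step l)
  have "a < l" "T \<subseteq> {..<l}" using step.hyps(1) assms(2,3) by auto
  then show ?case using corr_Suc step.IH by simp
qed simp

text \<open>The common value of all correlations over j alternatives.\<close>
definition moment :: "(bool list \<Rightarrow> bool) \<Rightarrow> nat \<Rightarrow> nat \<Rightarrow> real" where
  "moment g n j = corr g n (Suc j) 0 {1..j}"

lemma corr_eq_moment:
  assumes a: "a < k" and X: "X \<subseteq> {..<k} - {a}"
  shows "corr g n k a X = moment g n (card X)"
proof -
  have "card X \<le> card ({..<k} - {a})" using X by (intro card_mono) auto
  then have j: "Suc (card X) \<le> k" using a by simp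
  have "corr g n k a X = corr g n k 0 {1..card X}"
    by (rule corr_relabel) (use a X j in auto)
  also have "\<dots> = moment g n (card X)"
    unfolding moment_def by (rule corr_stable) (use j in auto)
  finally show ?thesis .
qed

lemma moment_0: "moment g n 0 = 1"
  unfolding moment_def corr_def by (simp add: uniform_mean_const)

text \<open>Reversing all orders negates an odd number of signs, so odd correlations vanish.\<close>
lemma corr_odd_card:
  assumes g: "odd_bool_fun n g" and a: "a < k" and T: "T \<subseteq> {..<k} - {a}"
    and odd: "odd (card T)"
  shows "corr g n k a T = 0"
proof -
  have "corr g n k a T
      = uniform_mean n k (\<lambda>xs. \<Prod>b\<in>T. signed g (pref (map (\<lambda>p. reverse_rank k \<circ> p) xs) a b))"
    unfolding corr_def by (rule uniform_mean_map_bij[OF bij_reverse, symmetric])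
  also have "\<dots> = uniform_mean n k (\<lambda>xs. - (\<Prod>b\<in>T. signed g (pref xs a b)))"
    unfolding uniform_mean_def
  proof (intro arg_cong2[where f = "(/)"] sum.cong refl)
    fix xs assume xs: "xs \<in> profiles n k"
    have "signed g (pref (map (\<lambda>p. reverse_rank k \<circ> p) xs) a b) = - signed g (pref xs a b)"
      if "b \<in> T" for b
    proof -
      have "b < k" "a \<noteq> b" using that T by auto
      then show ?thesis
        using pref_reverse[OF xs a] signed_Not[OF g] length_profile[OF xs] by simp
    qed
    then show "(\<Prod>b\<in>T. signed g (pref (map (\<lambda>p. reverse_rank k \<circ> p) xs) a b))
        = - (\<Prod>b\<in>T. signed g (pref xs a b))"
      using odd by (simp add: prod_uminus cong: prod.cong)
  qed
  also have "\<dots> = - corr g n k a T"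
    using uniform_mean_cmult[where c = "-1"] unfolding corr_def by simp
  finally show ?thesis by simp
qed

lemma moment_odd: "odd_bool_fun n g \<Longrightarrow> odd j \<Longrightarrow> moment g n j = 0"
  unfolding moment_def by (rule corr_odd_card) auto

definition is_winner :: "(bool list \<Rightarrow> bool) \<Rightarrow> nat \<Rightarrow> (nat \<Rightarrow> nat) list \<Rightarrow> nat \<Rightarrow> bool" where
  "is_winner g k xs a \<longleftrightarrow> (\<forall>b<k. b \<noteq> a \<longrightarrow> g (pref xs a b))"

lemma winner_unique:
  assumes g: "odd_bool_fun n g" and xs: "xs \<in> profiles n k"
    and a: "a < k" "a' < k" and W: "is_winner g k xs a" "is_winner g k xs a'"
  shows "a = a'"
proof (rule ccontr)
  assume ne: "a \<noteq> a'"
  then have "g (pref xs a a')" "g (pref xs a' a)" using W a unfolding is_winner_def by auto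
  moreover have "pref xs a' a = map Not (pref xs a a')" using pref_swap[OF xs a ne] .
  ultimately show False
    using g length_profile[OF xs] unfolding odd_bool_fun_def by auto
qed

lemma GCW_uniform_mean: "GCW g n k = uniform_mean n k (\<lambda>xs. if has_GCW g k xs then 1 else 0)"
  unfolding GCW_def uniform_mean_def by (simp add: sum.inter_filter[OF finite_profiles, symmetric])

lemma GCW_indicator_eq_sum:
  assumes g: "odd_bool_fun n g" and xs: "xs \<in> profiles n k"
  shows "(if has_GCW g k xs then 1 else 0) = (\<Sum>a<k. if is_winner g k xs a then 1 else (0::real))"
proof (cases "has_GCW g k xs")
  case True
  then obtain a where a: "a < k" "is_winner g k xs a"
    unfolding has_GCW_def is_winner_def by blast
  have "is_winner g k xs a' \<longleftrightarrow> a' = a" if "a' < k" for a'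
    using winner_unique[OF g xs that a(1)] a(2) by blast
  then have "(\<Sum>a'<k. if is_winner g k xs a' then 1 else (0::real)) = (\<Sum>a'<k. if a' = a then 1 else 0)"
    by (intro sum.cong) simp_all
  then show ?thesis using True a(1) by simp
next
  case False
  then have "\<not> is_winner g k xs a" if "a < k" for a
    using that unfolding has_GCW_def is_winner_def by blast
  then show ?thesis using False by (simp add: sum.neutral)
qed

lemma prod_half_one_plus:
  fixes s :: "'a \<Rightarrow> real"
  assumes B: "finite B"
  shows "(\<Prod>b\<in>B. (1 + s b) / 2) = (1/2) ^ card B * (\<Sum>X\<in>Pow B. \<Prod>b\<in>X. s b)"
proof -
  have "(\<Prod>b\<in>B. 1 + s b) = (\<Sum>X\<in>Pow B. \<Prod>b\<in>X. s b)"
    using prod_add[OF B, of s "\<lambda>_. 1"] by (simp add: add.commute)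
  then show ?thesis by (simp add: prod_dividef power_one_over)
qed

lemma winner_indicator_expansion:
  assumes a: "a < k"
  shows "(if is_winner g k xs a then 1 else 0)
       = (1/2) ^ (k - 1) * (\<Sum>X\<in>Pow ({..<k} - {a}). \<Prod>b\<in>X. signed g (pref xs a b))"
proof -
  let ?B = "{..<k} - {a}"
  have "(if is_winner g k xs a then 1 else 0) = (\<Prod>b\<in>?B. (1 + signed g (pref xs a b)) / 2)"
  proof (cases "is_winner g k xs a")
    case True
    then have "\<forall>b\<in>?B. (1 + signed g (pref xs a b)) / 2 = 1"
      by (auto simp: is_winner_def signed_def)
    then show ?thesis using True by (simp add: prod.neutral)
  next
    case False
    then obtain b where "b \<in> ?B" "\<not> g (pref xs a b)" unfolding is_winner_def by auto
    then have "\<exists>b\<in>?B. (1 + signed g (pref xs a b)) / 2 = 0" by (auto simp: signed_def)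
    then show ?thesis using False by (simp add: prod_zero)
  qed
  then show ?thesis using a by (simp add: prod_half_one_plus)
qed

lemma sum_Pow_card:
  fixes f :: "nat \<Rightarrow> real"
  assumes B: "finite B"
  shows "(\<Sum>X\<in>Pow B. f (card X)) = (\<Sum>j\<le>card B. real (card B choose j) * f j)"
proof -
  have img: "card ` Pow B \<subseteq> {..card B}" using B by (auto intro: card_mono)
  have "(\<Sum>X\<in>Pow B. f (card X)) = (\<Sum>j\<le>card B. \<Sum>X | X \<in> Pow B \<and> card X = j. f j)"
    using sum.group[OF finite_Pow_iff[THEN iffD2, OF B] finite_atMost img, of "\<lambda>X. f (card X)"]
    by (auto intro!: sum.cong)
  also have "\<dots> = (\<Sum>j\<le>card B. real (card B choose j) * f j)"
  proof (rule sum.cong[OF refl])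
    fix j
    have "{X. X \<in> Pow B \<and> card X = j} = {X. X \<subseteq> B \<and> card X = j}" by auto
    then show "(\<Sum>X | X \<in> Pow B \<and> card X = j. f j) = real (card B choose j) * f j"
      using n_subsets[OF B, of j] by simp
  qed
  finally show ?thesis .
qed

lemma winner_probability:
  assumes a: "a < k"
  shows "uniform_mean n k (\<lambda>xs. if is_winner g k xs a then 1 else 0)
       = (1/2) ^ (k - 1) * (\<Sum>j\<le>k - 1. real (k - 1 choose j) * moment g n j)"
proof -
  let ?B = "{..<k} - {a}"
  have "uniform_mean n k (\<lambda>xs. if is_winner g k xs a then 1 else 0)
      = (1/2) ^ (k - 1) * (\<Sum>X\<in>Pow ?B. corr g n k a X)"
    by (simp add: winner_indicator_expansion[OF a] uniform_mean_cmult uniform_mean_sum corr_def)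
  also have "(\<Sum>X\<in>Pow ?B. corr g n k a X) = (\<Sum>X\<in>Pow ?B. moment g n (card X))"
    using corr_eq_moment[OF a] by (intro sum.cong) auto
  also have "\<dots> = (\<Sum>j\<le>k - 1. real (k - 1 choose j) * moment g n j)"
    using sum_Pow_card[of ?B "moment g n"] a by simp
  finally show ?thesis .
qed

lemma GCW_moment_formula:
  assumes g: "odd_bool_fun n g"
  shows "GCW g n k = real k * (1/2) ^ (k - 1) * (\<Sum>j\<le>k - 1. real (k - 1 choose j) * moment g n j)"
proof -
  have "GCW g n k = uniform_mean n k (\<lambda>xs. \<Sum>a<k. if is_winner g k xs a then 1 else 0)"
    unfolding GCW_uniform_mean by (rule uniform_mean_cong) (rule GCW_indicator_eq_sum[OF g])
  also have "\<dots> = (\<Sum>a<k. uniform_mean n k (\<lambda>xs. if is_winner g k xs a then 1 else 0))"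
    by (rule uniform_mean_sum)
  also have "\<dots> = (\<Sum>a<k. (1/2) ^ (k - 1) * (\<Sum>j\<le>k - 1. real (k - 1 choose j) * moment g n j))"
    using winner_probability by (intro sum.cong) auto
  finally show ?thesis by simp
qed

text \<open>For k = 3..6 only moment 2 and moment 4 survive; eliminating them gives the
  two identities.\<close>
theorem mainTheorem9:
  fixes g :: "bool list \<Rightarrow> bool" and n :: nat
  assumes "odd_bool_fun n g"
  shows "GCW g n 4 = 2 * GCW g n 3 - 1 \<and>
         GCW g n 5 = GCW g n 6 / 3 + 5 * GCW g n 3 / 3 - 1"
proof -
  note expand = GCW_moment_formula[OF assms] moment_0 moment_odd[OF assms]
    atMost_nat_numeral binomial_fact fact_numeral power_one_over
  have "GCW g n 3 = 3/4 * (1 + moment g n 2)"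
    "GCW g n 4 = 1/2 * (1 + 3 * moment g n 2)"
    "GCW g n 5 = 5/16 * (1 + 6 * moment g n 2 + moment g n 4)"
    "GCW g n 6 = 3/16 * (1 + 10 * moment g n 2 + 5 * moment g n 4)"
    by (simp_all add: expand)
  then show ?thesis by simp
qed

end
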